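(* The following transitive interval exchange transformations exist: (a) for each $f\in\{1,2,3\}$, a transitive $4$-IET with exactly $f$ flips and without fake discontinuities; (b) a transitive $5$-IET with exactly $5$ flips having exactly one fake discontinuity; (c) a transitive $5$-IET with exactly $5$ flips and without fake discontinuities.
   Context: An $n$-IET $T$ of $[0,\ell]$ is given by a partition $0=a_0<\dots<a_n=\ell$, domain intervals $I_i=(a_{i-1},a_i)$, and an injective map $T:\bigcup I_i\to[0,\ell]$ that is an isometry on each $I_i$ and cannot be continuously extended to a larger open set. Let $J_1,\dots,J_n$ be the range intervals, ordered left to right. Define the permutation $\pi$ of $\{1,\dots,n\}$ by $T(I_i)=J_{\pi(i)}$ and $\theta_i=+1$ if $T$ preserves orientation on $I_i$, $\theta_i=-1$ if it reverses it (a flip). $T$ has a fake discontinuity if precisely one of the following happens: (a) for exactly one $1\le i\le n-1$, $\pi(i)=n$, $\pi(i+1)=1$ and $\theta_i=\theta_{i+1}=+1$; (b) for exactly one $1\le i\le n-1$, $\pi(i)=1$, $\pi(i+1)=n$ and $\theta_i=\theta_{i+1}=-1$; (c) $\pi(1)=\pi(n)+1$ and $\theta_1=\theta_n=+1$; (d) $\pi(1)=\pi(n)-1$ and $\theta_1=\theta_n=-1$. $T$ is without fake discontinuities if none of (a)–(d) occurs. $T$ is transitive if some orbit $\{T^m(p): m\in\mathbb{Z},\ p\in\mathrm{Dom}(T^m)\}$ is dense in $[0,\ell]$. *)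

theory Defs
  imports "HOL-Analysis.Analysis"
begin

definition dom_int :: "(nat \<Rightarrow> real) \<Rightarrow> nat \<Rightarrow> real set" where
  "dom_int a i = {a (i - 1)<..<a i}"

definition iet_dom :: "nat \<Rightarrow> (nat \<Rightarrow> real) \<Rightarrow> real set" where
  "iet_dom n a = (\<Union>i\<in>{1..n}. dom_int a i)"

text \<open>T is an n-IET of [0,l] with partition a (T is only relevant on iet_dom n a).
  Non-extendability: at no interior partition point do the one-sided limits agree.\<close>

definition is_IET :: "nat \<Rightarrow> real \<Rightarrow> (nat \<Rightarrow> real) \<Rightarrow> (real \<Rightarrow> real) \<Rightarrow> bool" where
  "is_IET n l a T \<longleftrightarrow>
     n \<ge> 1 \<and> a 0 = 0 \<and> a n = l \<and> (\<forall>i<n. a i < a (i + 1)) \<and>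
     (\<forall>i\<in>{1..n}. \<forall>x\<in>dom_int a i. \<forall>y\<in>dom_int a i. \<bar>T x - T y\<bar> = \<bar>x - y\<bar>) \<and>
     inj_on T (iet_dom n a) \<and> T ` iet_dom n a \<subseteq> {0..l} \<and>
     (\<forall>i\<in>{1..n-1}. \<not> (\<exists>y. (T \<longlongrightarrow> y) (at_left (a i)) \<and> (T \<longlongrightarrow> y) (at_right (a i))))"

definition iet_theta :: "(nat \<Rightarrow> real) \<Rightarrow> (real \<Rightarrow> real) \<Rightarrow> nat \<Rightarrow> int" where
  "iet_theta a T i =
     (if \<forall>x\<in>dom_int a i. \<forall>y\<in>dom_int a i. x < y \<longrightarrow> T x < T y then 1 else -1)"

text \<open>Permutation: T(I_i) = J_(pi i), where J_1,...,J_n are the range intervals ordered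
  left to right; pi i is the rank of T(I_i) (compared via images of midpoints).\<close>

definition iet_mid :: "(nat \<Rightarrow> real) \<Rightarrow> nat \<Rightarrow> real" where
  "iet_mid a i = (a (i - 1) + a i) / 2"

definition iet_pi :: "nat \<Rightarrow> (nat \<Rightarrow> real) \<Rightarrow> (real \<Rightarrow> real) \<Rightarrow> nat \<Rightarrow> nat" where
  "iet_pi n a T i = card {j\<in>{1..n}. T (iet_mid a j) < T (iet_mid a i)} + 1"

definition num_flips :: "nat \<Rightarrow> (nat \<Rightarrow> real) \<Rightarrow> (real \<Rightarrow> real) \<Rightarrow> nat" where
  "num_flips n a T = card {i\<in>{1..n}. iet_theta a T i = -1}"

text \<open>Number of occurrences of the configurations (a)-(d).  T has a fake discontinuity iff
  this count is exactly 1, and is without fake discontinuities iff it is 0.\<close>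

definition fake_count :: "nat \<Rightarrow> (nat \<Rightarrow> real) \<Rightarrow> (real \<Rightarrow> real) \<Rightarrow> nat" where
  "fake_count n a T =
     (let p = iet_pi n a T; th = iet_theta a T in
        card {i\<in>{1..n-1}. p i = n \<and> p (i + 1) = 1 \<and> th i = 1 \<and> th (i + 1) = 1}
      + card {i\<in>{1..n-1}. p i = 1 \<and> p (i + 1) = n \<and> th i = -1 \<and> th (i + 1) = -1}
      + (if p 1 = p n + 1 \<and> th 1 = 1 \<and> th n = 1 then 1 else 0)
      + (if p 1 + 1 = p n \<and> th 1 = -1 \<and> th n = -1 then 1 else 0))"

definition has_fake_discontinuity :: "nat \<Rightarrow> (nat \<Rightarrow> real) \<Rightarrow> (real \<Rightarrow> real) \<Rightarrow> bool" where
  "has_fake_discontinuity n a T \<longleftrightarrow> fake_count n a T = 1"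

definition no_fake_discontinuity :: "nat \<Rightarrow> (nat \<Rightarrow> real) \<Rightarrow> (real \<Rightarrow> real) \<Rightarrow> bool" where
  "no_fake_discontinuity n a T \<longleftrightarrow> fake_count n a T = 0"

text \<open>Orbit: forward iterates T^k p (p, Tp, ..., T^(k-1) p all in the domain) and backward
  iterates q with T^k q = p (q, ..., T^(k-1) q in the domain), i.e. q = T^(-k) p.\<close>

definition iter_ok :: "real set \<Rightarrow> (real \<Rightarrow> real) \<Rightarrow> real \<Rightarrow> nat \<Rightarrow> bool" where
  "iter_ok D T x k \<longleftrightarrow> (\<forall>j<k. (T ^^ j) x \<in> D)"

definition iet_orbit :: "nat \<Rightarrow> (nat \<Rightarrow> real) \<Rightarrow> (real \<Rightarrow> real) \<Rightarrow> real \<Rightarrow> real set" where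
  "iet_orbit n a T p =
     {(T ^^ k) p | k. iter_ok (iet_dom n a) T p k}
     \<union> {q. \<exists>k. iter_ok (iet_dom n a) T q k \<and> (T ^^ k) q = p}"

definition iet_transitive :: "nat \<Rightarrow> real \<Rightarrow> (nat \<Rightarrow> real) \<Rightarrow> (real \<Rightarrow> real) \<Rightarrow> bool" where
  "iet_transitive n l a T \<longleftrightarrow>
     (\<exists>p\<in>{0..l}. {0..l} \<subseteq> closure (iet_orbit n a T p))"

end

theory Submission
  imports Defs
begin

text \<open>Each of the five maps is a tower over an irrational rotation: a unit interval
  [b, b + 1] returns to itself after m steps with first-return map x \<mapsto> x + c (mod 1),
  and its m - 1 intermediate images are unit intervals which, together with the base, cover
  [0, l]. By Kronecker's theorem the forward orbit of b + c is dense in the base, hence in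
  every floor, hence in [0, l]. The maps are affine with slope \<plusminus>1 on each piece, so the
  flips, the permutation and the fake discontinuities are read off from the affine data.\<close>

lemma iter_ok_add:
  "iter_ok D T x (k + i) \<longleftrightarrow> iter_ok D T x k \<and> iter_ok D T ((T ^^ k) x) i"
proof -
  have shift: "(T ^^ j) ((T ^^ k) x) = (T ^^ (k + j)) x" for j
    by (simp add: funpow_add add.commute)
  show ?thesis
    unfolding iter_ok_def shift
    by (metis add_diff_inverse_nat add_less_cancel_left trans_less_add1)
qed

definition rotation :: "real \<Rightarrow> real \<Rightarrow> real" where
  "rotation c x = (if x + c < 1 then x + c else x + c - 1)"

lemma frac_add_rotation:
  assumes "0 \<le> c" "c < 1"
  shows "frac (x + c) = rotation c (frac x)"
  using assms by (simp add: frac_add frac_eq rotation_def)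

lemma frac_Suc_mult_irrational:
  fixes c :: real
  assumes c: "c \<notin> \<rat>" "0 < c" "c < 1"
  shows "0 < frac (real (Suc k) * c)" "frac (real (Suc k) * c) + c \<noteq> 1"
    and "frac (real (Suc (Suc k)) * c) = rotation c (frac (real (Suc k) * c))"
proof -
  have nonzero: "frac (real (Suc k) * c) \<noteq> 0" for k
  proof
    assume "frac (real (Suc k) * c) = 0"
    then obtain z where "real (Suc k) * c = of_int z"
      by (auto simp: frac_eq_0_iff elim: Ints_cases)
    then have "c = of_int z / real (Suc k)"
      by (simp add: field_simps)
    with c(1) show False by simp
  qed
  then show "0 < frac (real (Suc k) * c)"
    using frac_ge_0 by (simp add: order_le_less)
  show rot: "frac (real (Suc (Suc k)) * c) = rotation c (frac (real (Suc k) * c))"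
    using frac_add_rotation[of c "real (Suc k) * c"] c by (simp add: algebra_simps)
  have "rotation c (frac (real (Suc k) * c)) \<noteq> 0"
    using nonzero[of "Suc k"] rot by metis
  then show "frac (real (Suc k) * c) + c \<noteq> 1"
    by (auto simp: rotation_def)
qed

lemma unit_floors_cover:
  fixes cc ss :: "nat \<Rightarrow> real"
  assumes slope: "\<And>j. j < m \<Longrightarrow> \<bar>ss j\<bar> = 1"
    and floors: "\<forall>k<L. \<exists>j<m. min (cc j) (cc j + ss j) = real k"
    and z: "0 \<le> z" "z \<le> real L" and L: "0 < L"
  obtains j y where "j < m" "0 \<le> y" "y \<le> 1" "z = cc j + ss j * y"
proof -
  obtain k where k: "k < L" "real k \<le> z" "z \<le> real k + 1"
  proof (cases "z = real L")
    case True
    then show ?thesis using L by (intro that[of "L - 1"]) (auto simp: of_nat_diff)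
  next
    case False
    then have "nat \<lfloor>z\<rfloor> < L" using z by linarith
    then show ?thesis using z by (intro that[of "nat \<lfloor>z\<rfloor>"]) linarith+
  qed
  obtain j where j: "j < m" "min (cc j) (cc j + ss j) = real k"
    using floors k(1) by blast
  consider "ss j = 1" | "ss j = -1"
    using slope[OF j(1)] by linarith
  then show ?thesis
  proof cases
    case 1
    then show ?thesis using j k by (intro that[of j "z - cc j"]) auto
  next
    case 2
    then show ?thesis using j k by (intro that[of j "cc j - z"]) auto
  qed
qed

text \<open>The point x = 1 - c is excluded: it returns to b,
  which need not lie in the domain.\<close>

locale rotation_tower =
  fixes T :: "real \<Rightarrow> real" and D :: "real set" and c b :: real and m :: nat
    and cc ss :: "nat \<Rightarrow> real"
  assumes irrational: "c \<notin> \<rat>" and c_pos: "0 < c" and c_less_1: "c < 1"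
    and floor_slope: "\<And>j. j < m \<Longrightarrow> \<bar>ss j\<bar> = 1"
    and floor_iterate: "\<And>x j. 0 < x \<Longrightarrow> x < 1 \<Longrightarrow> x + c \<noteq> 1 \<Longrightarrow> j < m \<Longrightarrow>
      (T ^^ j) (b + x) = cc j + ss j * x \<and> cc j + ss j * x \<in> D"
    and first_return: "\<And>x. 0 < x \<Longrightarrow> x < 1 \<Longrightarrow> x + c \<noteq> 1 \<Longrightarrow>
      (T ^^ m) (b + x) = b + rotation c x"
begin

lemma iter_ok_from_base:
  assumes "0 < x" "x < 1" "x + c \<noteq> 1" "j \<le> m"
  shows "iter_ok D T (b + x) j"
  using floor_iterate[OF assms(1-3)] assms(4) by (auto simp: iter_ok_def)

lemma base_orbit:
  "(T ^^ (m * k)) (b + c) = b + frac (real (Suc k) * c) \<and> iter_ok D T (b + c) (m * k)"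
proof (induction k)
  case 0
  show ?case using c_pos c_less_1 by (simp add: frac_eq iter_ok_def)
next
  case (Suc k)
  define x where "x = frac (real (Suc k) * c)"
  have x: "0 < x" "x < 1" "x + c \<noteq> 1"
    using frac_Suc_mult_irrational[OF irrational c_pos c_less_1, of k] frac_lt_1 by (auto simp: x_def)
  have "(T ^^ (m * Suc k)) (b + c) = (T ^^ m) (b + x)"
    using Suc.IH by (simp add: funpow_add x_def)
  also have "\<dots> = b + frac (real (Suc (Suc k)) * c)"
    using first_return[OF x] frac_Suc_mult_irrational[OF irrational c_pos c_less_1, of k]
    by (simp add: x_def)
  moreover have "iter_ok D T (b + c) (m * k + m)"
    using Suc.IH iter_ok_from_base[OF x, of m] by (simp add: iter_ok_add x_def)
  ultimately show ?case
    by (simp add: add.commute)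
qed

lemma floor_orbit:
  assumes "j < m"
  shows "(T ^^ (m * k + j)) (b + c) = cc j + ss j * frac (real (Suc k) * c)
    \<and> iter_ok D T (b + c) (m * k + j)"
proof -
  define x where "x = frac (real (Suc k) * c)"
  have x: "0 < x" "x < 1" "x + c \<noteq> 1"
    using frac_Suc_mult_irrational[OF irrational c_pos c_less_1, of k] frac_lt_1 by (auto simp: x_def)
  have "(T ^^ (m * k + j)) (b + c) = (T ^^ j) (b + x)"
    using base_orbit[of k] by (simp add: funpow_add add.commute x_def)
  then show ?thesis
    using base_orbit[of k] floor_iterate[OF x assms] iter_ok_from_base[OF x, of j] assms
    by (simp add: iter_ok_add x_def)
qed

lemma floor_in_closure_orbit:
  assumes j: "j < m" and y: "0 \<le> y" "y \<le> 1"
  shows "cc j + ss j * y \<in> closure {(T ^^ k) (b + c) | k. iter_ok D T (b + c) k}"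
  unfolding closure_approachable
proof (intro allI impI)
  fix e :: real
  assume "e > 0"
  then obtain k where k: "0 < k" "\<bar>frac (real k * c) - y\<bar> < e"
    using Kronecker_approx_1_explicit[OF irrational y] by blast
  then obtain i where i: "k = Suc i"
    using gr0_implies_Suc by blast
  have "dist (cc j + ss j * frac (real k * c)) (cc j + ss j * y) =
      \<bar>ss j\<bar> * \<bar>frac (real k * c) - y\<bar>"
    by (simp add: dist_real_def abs_mult[symmetric] algebra_simps)
  also have "\<dots> < e"
    using floor_slope[OF j] k by simp
  finally show "\<exists>z\<in>{(T ^^ k) (b + c) | k. iter_ok D T (b + c) k}. dist z (cc j + ss j * y) < e"
    using floor_orbit[OF j, of i] i by (metis (mono_tags, lifting) mem_Collect_eq)
qed

lemma iet_transitiveI: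
  assumes "D = iet_dom n a" and "0 \<le> b + c" "b + c \<le> real L" and "0 < L"
    and "\<forall>k<L. \<exists>j<m. min (cc j) (cc j + ss j) = real k"
  shows "iet_transitive n (real L) a T"
  unfolding iet_transitive_def
proof (intro bexI subsetI)
  show "b + c \<in> {0..real L}" using assms by simp
  fix z
  assume "z \<in> {0..real L}"
  then obtain j y where "j < m" "0 \<le> y" "y \<le> 1" "z = cc j + ss j * y"
    using unit_floors_cover[OF floor_slope assms(5)] assms(4) by auto
  then have "z \<in> closure {(T ^^ k) (b + c) | k. iter_ok D T (b + c) k}"
    using floor_in_closure_orbit by blast
  moreover have "{(T ^^ k) (b + c) | k. iter_ok D T (b + c) k} \<subseteq> iet_orbit n a T (b + c)"
    unfolding iet_orbit_def assms(1) by blast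
  ultimately show "z \<in> closure (iet_orbit n a T (b + c))"
    using closure_mono by blast
qed

end

lemma tendsto_at_left_affine:
  fixes T :: "real \<Rightarrow> real"
  assumes "d < p" "\<And>x. d < x \<Longrightarrow> x < p \<Longrightarrow> T x = u + s * x"
  shows "(T \<longlongrightarrow> u + s * p) (at_left p)"
proof -
  have "eventually (\<lambda>x. u + s * x = T x) (at_left p)"
    using eventually_at_left_real[OF assms(1)] by eventually_elim (use assms in auto)
  then show ?thesis
    by (rule Lim_transform_eventually[rotated]) (auto intro!: tendsto_eq_intros)
qed

lemma tendsto_at_right_affine:
  fixes T :: "real \<Rightarrow> real"
  assumes "p < e" "\<And>x. p < x \<Longrightarrow> x < e \<Longrightarrow> T x = u + s * x"
  shows "(T \<longlongrightarrow> u + s * p) (at_right p)"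
proof -
  have "eventually (\<lambda>x. u + s * x = T x) (at_right p)"
    using eventually_at_right_real[OF assms(1)] by eventually_elim (use assms in auto)
  then show ?thesis
    by (rule Lim_transform_eventually[rotated]) (auto intro!: tendsto_eq_intros)
qed

lemma card_filter_atLeastAtMost_eq_sum:
  "card {j\<in>{m..n::nat}. P j} = (\<Sum>j=m..n. if P j then 1 else 0)"
  unfolding sum.inter_filter[OF finite_atLeastAtMost, symmetric] by simp

definition image_lo ::
    "(nat \<Rightarrow> real) \<Rightarrow> (nat \<Rightarrow> real) \<Rightarrow> (nat \<Rightarrow> real) \<Rightarrow> nat \<Rightarrow> real" where
  "image_lo a u s i = min (u i + s i * a (i - 1)) (u i + s i * a i)"

definition image_hi ::
    "(nat \<Rightarrow> real) \<Rightarrow> (nat \<Rightarrow> real) \<Rightarrow> (nat \<Rightarrow> real) \<Rightarrow> nat \<Rightarrow> real" where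
  "image_hi a u s i = max (u i + s i * a (i - 1)) (u i + s i * a i)"

locale affine_iet =
  fixes n :: nat and l :: real and a u s :: "nat \<Rightarrow> real" and T :: "real \<Rightarrow> real"
  assumes n_pos: "1 \<le> n" and a_0: "a 0 = 0" and a_n: "a n = l"
    and a_increasing: "\<And>i. i < n \<Longrightarrow> a i < a (i + 1)"
    and affine: "\<And>i x. i \<in> {1..n} \<Longrightarrow> x \<in> dom_int a i \<Longrightarrow> T x = u i + s i * x"
    and slope: "\<And>i. i \<in> {1..n} \<Longrightarrow> s i = 1 \<or> s i = -1"
    and images_disjoint: "\<And>i j. i \<in> {1..n} \<Longrightarrow> j \<in> {1..n} \<Longrightarrow> i < j \<Longrightarrow>
      image_hi a u s i \<le> image_lo a u s j \<or> image_hi a u s j \<le> image_lo a u s i"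
    and images_range: "\<And>i. i \<in> {1..n} \<Longrightarrow> 0 \<le> image_lo a u s i \<and> image_hi a u s i \<le> l"
    and genuine_jumps:
      "\<And>i. i \<in> {1..n - 1} \<Longrightarrow> u i + s i * a i \<noteq> u (i + 1) + s (i + 1) * a i"
begin

lemma piece_nonempty: "i \<in> {1..n} \<Longrightarrow> a (i - 1) < a i"
  using a_increasing[of "i - 1"] by auto

lemma image_bounds:
  assumes i: "i \<in> {1..n}" and x: "x \<in> dom_int a i"
  shows "image_lo a u s i < T x" "T x < image_hi a u s i"
  using affine[OF i x] slope[OF i] x by (auto simp: image_lo_def image_hi_def dom_int_def)

lemma inj_on_dom: "inj_on T (iet_dom n a)"
proof (rule inj_onI)
  fix x y
  assume "x \<in> iet_dom n a" "y \<in> iet_dom n a" and eq: "T x = T y"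
  then obtain i j where i: "i \<in> {1..n}" "x \<in> dom_int a i" and j: "j \<in> {1..n}" "y \<in> dom_int a j"
    by (auto simp: iet_dom_def)
  have "i = j"
  proof (rule ccontr)
    assume "i \<noteq> j"
    then have "image_hi a u s i \<le> image_lo a u s j \<or> image_hi a u s j \<le> image_lo a u s i"
      using images_disjoint i(1) j(1) by (metis linorder_neqE_nat)
    then show False
      using image_bounds[OF i] image_bounds[OF j] eq by linarith
  qed
  then show "x = y"
    using affine[OF i] affine[OF j(1)] slope[OF i(1)] i j eq by auto
qed

lemma no_continuous_extension:
  assumes i: "i \<in> {1..n - 1}"
  shows "\<not> (\<exists>y. (T \<longlongrightarrow> y) (at_left (a i)) \<and> (T \<longlongrightarrow> y) (at_right (a i)))"
proof
  have i1: "i \<in> {1..n}" and i2: "i + 1 \<in> {1..n}"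
    using i by auto
  have left: "(T \<longlongrightarrow> u i + s i * a i) (at_left (a i))"
    using piece_nonempty[OF i1] affine[OF i1] by (intro tendsto_at_left_affine) (auto simp: dom_int_def)
  have right: "(T \<longlongrightarrow> u (i + 1) + s (i + 1) * a i) (at_right (a i))"
    using piece_nonempty[OF i2] affine[OF i2] by (intro tendsto_at_right_affine) (auto simp: dom_int_def)
  assume "\<exists>y. (T \<longlongrightarrow> y) (at_left (a i)) \<and> (T \<longlongrightarrow> y) (at_right (a i))"
  then have "u i + s i * a i = u (i + 1) + s (i + 1) * a i"
    using left right tendsto_unique[OF trivial_limit_at_left_real] tendsto_unique[OF trivial_limit_at_right_real]
    by metis
  with genuine_jumps[OF i] show False ..
qed

theorem is_IET: "is_IET n l a T"
proof -
  have "\<bar>T x - T y\<bar> = \<bar>x - y\<bar>"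
    if "i \<in> {1..n}" "x \<in> dom_int a i" "y \<in> dom_int a i" for i x y
    using affine[OF that(1,2)] affine[OF that(1,3)] slope[OF that(1)] by (auto simp: abs_minus_commute)
  moreover have "T ` iet_dom n a \<subseteq> {0..l}"
  proof
    fix z
    assume "z \<in> T ` iet_dom n a"
    then obtain i x where i: "i \<in> {1..n}" and x: "x \<in> dom_int a i" and z: "z = T x"
      by (auto simp: iet_dom_def)
    show "z \<in> {0..l}"
      using image_bounds[OF i x] images_range[OF i] z by simp
  qed
  ultimately show ?thesis
    unfolding is_IET_def using n_pos a_0 a_n a_increasing inj_on_dom no_continuous_extension
    by (intro conjI; assumption | simp)
qed

lemma iet_theta_eq:
  assumes i: "i \<in> {1..n}"
  shows "iet_theta a T i = (if s i = 1 then 1 else -1)"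
proof (cases "s i = 1")
  case True
  then show ?thesis
    using affine[OF i] by (auto simp: iet_theta_def)
next
  case False
  define x where "x = (3 * a (i - 1) + a i) / 4"
  define y where "y = (a (i - 1) + 3 * a i) / 4"
  have "x \<in> dom_int a i" "y \<in> dom_int a i" "x < y"
    using piece_nonempty[OF i] by (auto simp: dom_int_def x_def y_def)
  moreover have "s i = -1"
    using slope[OF i] False by simp
  ultimately have "\<not> (T x < T y)"
    using affine[OF i] by auto
  then show ?thesis
    using \<open>x \<in> dom_int a i\<close> \<open>y \<in> dom_int a i\<close> \<open>x < y\<close> False
    by (auto simp: iet_theta_def)
qed

lemma num_flips_eq: "num_flips n a T = (\<Sum>i=1..n. if s i = -1 then 1 else 0)"
proof -
  have "num_flips n a T = card {i\<in>{1..n}. s i = -1}"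
    unfolding num_flips_def by (rule arg_cong[where f = card]) (use iet_theta_eq slope in force)
  then show ?thesis
    unfolding card_filter_atLeastAtMost_eq_sum .
qed

lemma iet_pi_eq:
  assumes "i \<in> {1..n}"
  shows "iet_pi n a T i =
    (\<Sum>j=1..n. if u j + s j * iet_mid a j < u i + s i * iet_mid a i then 1 else 0) + 1"
proof -
  have mid: "T (iet_mid a j) = u j + s j * iet_mid a j" if "j \<in> {1..n}" for j
    using affine[OF that] piece_nonempty[OF that] by (simp add: iet_mid_def dom_int_def)
  show ?thesis
    unfolding iet_pi_def card_filter_atLeastAtMost_eq_sum using mid[OF assms]
    by (simp add: mid cong: if_cong)
qed

end

lemma atLeastAtMost_nat_numeral:
  "{m..numeral k :: nat} = (if m \<le> numeral k then insert (numeral k) {m..pred_numeral k} else {})"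
  by (simp add: numeral_eq_Suc atLeastAtMostSuc_conv)

context
  fixes c :: real
  assumes c: "c \<notin> \<rat>" "0 < c" "c < 1"
begin

text \<open>Permutation (4 2 1 3). Here and below, the offset and slope lists carry a dummy entry
  for the unused index 0.\<close>

definition one_flip_partition :: "nat \<Rightarrow> real" where
  "one_flip_partition i = [0, 2, 3 - c, 3, 4] ! i"

definition one_flip_iet :: "real \<Rightarrow> real" where
  "one_flip_iet x =
    (if x < 2 then 4 - x
    else if x < 3 - c then x + c - 2
    else if x < 3 then x + c - 3
    else x - 2)"

lemma one_flip_iet_properties:
  "is_IET 4 4 one_flip_partition one_flip_iet \<and> iet_transitive 4 4 one_flip_partition one_flip_iet \<and>
    num_flips 4 one_flip_partition one_flip_iet = 1 \<and>
    no_fake_discontinuity 4 one_flip_partition one_flip_iet"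
proof -
  interpret affine_iet 4 4 one_flip_partition "(!) [0, 4, c - 2, c - 3, -2]"
      "(!) [0, -1, 1, 1, 1]" one_flip_iet
    using c by unfold_locales
      (auto simp: one_flip_partition_def one_flip_iet_def dom_int_def image_lo_def image_hi_def
         numeral_eq_Suc le_Suc_eq less_Suc_eq)
  interpret rotation_tower one_flip_iet "iet_dom 4 one_flip_partition" c 0 4
      "(!) [0, 4, 2, 2]" "(!) [1, -1, -1, 1]"
    using c by unfold_locales
      (auto simp: one_flip_iet_def one_flip_partition_def rotation_def iet_dom_def dom_int_def
        numeral_eq_Suc less_Suc_eq atLeastAtMostSuc_conv)
  have "iet_transitive 4 (real 4) one_flip_partition one_flip_iet"
    using c by (intro iet_transitiveI) (auto simp: numeral_eq_Suc less_Suc_eq)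
  moreover have "num_flips 4 one_flip_partition one_flip_iet = 1"
    by (simp add: num_flips_eq atLeastAtMost_nat_numeral)
  moreover have "no_fake_discontinuity 4 one_flip_partition one_flip_iet"
    unfolding no_fake_discontinuity_def fake_count_def Let_def card_filter_atLeastAtMost_eq_sum
    using c by (simp add: iet_pi_eq iet_theta_eq atLeastAtMost_nat_numeral iet_mid_def
        one_flip_partition_def field_simps)
  ultimately show ?thesis
    using is_IET by simp
qed

definition two_flip_partition :: "nat \<Rightarrow> real" where
  "two_flip_partition i = [0, 1, 2, 3 - c, 3] ! i"

definition two_flip_iet :: "real \<Rightarrow> real" where
  "two_flip_iet x =
    (if x < 1 then 2 - x
    else if x < 2 then 4 - x
    else if x < 3 - c then x + c - 2
    else x + c - 3)"

lemma two_flip_iet_properties: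
  "is_IET 4 3 two_flip_partition two_flip_iet \<and> iet_transitive 4 3 two_flip_partition two_flip_iet \<and>
    num_flips 4 two_flip_partition two_flip_iet = 2 \<and>
    no_fake_discontinuity 4 two_flip_partition two_flip_iet"
proof -
  interpret affine_iet 4 3 two_flip_partition "(!) [0, 2, 4, c - 2, c - 3]"
      "(!) [0, -1, -1, 1, 1]" two_flip_iet
    using c by unfold_locales
      (auto simp: two_flip_partition_def two_flip_iet_def dom_int_def image_lo_def image_hi_def
         numeral_eq_Suc le_Suc_eq less_Suc_eq)
  interpret rotation_tower two_flip_iet "iet_dom 4 two_flip_partition" c 0 3
      "(!) [0, 2, 2]" "(!) [1, -1, 1]"
    using c by unfold_locales
      (auto simp: two_flip_iet_def two_flip_partition_def rotation_def iet_dom_def dom_int_def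
        numeral_eq_Suc less_Suc_eq atLeastAtMostSuc_conv)
  have "iet_transitive 4 (real 3) two_flip_partition two_flip_iet"
    using c by (intro iet_transitiveI) (auto simp: numeral_eq_Suc less_Suc_eq)
  moreover have "num_flips 4 two_flip_partition two_flip_iet = 2"
    by (simp add: num_flips_eq atLeastAtMost_nat_numeral)
  moreover have "no_fake_discontinuity 4 two_flip_partition two_flip_iet"
    unfolding no_fake_discontinuity_def fake_count_def Let_def card_filter_atLeastAtMost_eq_sum
    using c by (simp add: iet_pi_eq iet_theta_eq atLeastAtMost_nat_numeral iet_mid_def
        two_flip_partition_def field_simps)
  ultimately show ?thesis
    using is_IET by simp
qed

definition three_flip_partition :: "nat \<Rightarrow> real" where
  "three_flip_partition i = [0, 1, 1 + c, 2, 3] ! i"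

definition three_flip_iet :: "real \<Rightarrow> real" where
  "three_flip_iet x =
    (if x < 1 then 2 - x
    else if x < 1 + c then 3 + c - x
    else if x < 2 then 4 + c - x
    else x - 2)"

lemma three_flip_iet_properties:
  "is_IET 4 3 three_flip_partition three_flip_iet \<and> iet_transitive 4 3 three_flip_partition three_flip_iet \<and>
    num_flips 4 three_flip_partition three_flip_iet = 3 \<and>
    no_fake_discontinuity 4 three_flip_partition three_flip_iet"
proof -
  interpret affine_iet 4 3 three_flip_partition "(!) [0, 2, 3 + c, 4 + c, -2]"
      "(!) [0, -1, -1, -1, 1]" three_flip_iet
    using c by unfold_locales
      (auto simp: three_flip_partition_def three_flip_iet_def dom_int_def image_lo_def image_hi_def
         numeral_eq_Suc le_Suc_eq less_Suc_eq)
  interpret rotation_tower three_flip_iet "iet_dom 4 three_flip_partition" c 2 3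
      "(!) [2, 0, 2]" "(!) [1, 1, -1]"
    using c by unfold_locales
      (auto simp: three_flip_iet_def three_flip_partition_def rotation_def iet_dom_def dom_int_def
        numeral_eq_Suc less_Suc_eq atLeastAtMostSuc_conv)
  have "iet_transitive 4 (real 3) three_flip_partition three_flip_iet"
    using c by (intro iet_transitiveI) (auto simp: numeral_eq_Suc less_Suc_eq)
  moreover have "num_flips 4 three_flip_partition three_flip_iet = 3"
    by (simp add: num_flips_eq atLeastAtMost_nat_numeral)
  moreover have "no_fake_discontinuity 4 three_flip_partition three_flip_iet"
    unfolding no_fake_discontinuity_def fake_count_def Let_def card_filter_atLeastAtMost_eq_sum
    using c by (simp add: iet_pi_eq iet_theta_eq atLeastAtMost_nat_numeral iet_mid_def
        three_flip_partition_def field_simps)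
  ultimately show ?thesis
    using is_IET by simp
qed

definition all_flip_partition :: "nat \<Rightarrow> real" where
  "all_flip_partition i = [0, 1, 2, 3, 3 + c, 4] ! i"

definition all_flip_iet :: "real \<Rightarrow> real" where
  "all_flip_iet x =
    (if x < 1 then 2 - x
    else if x < 2 then 4 - x
    else if x < 3 then 6 - x
    else if x < 3 + c then 3 + c - x
    else 4 + c - x)"

lemma all_flip_iet_properties:
  "is_IET 5 4 all_flip_partition all_flip_iet \<and> iet_transitive 5 4 all_flip_partition all_flip_iet \<and>
    num_flips 5 all_flip_partition all_flip_iet = 5 \<and>
    no_fake_discontinuity 5 all_flip_partition all_flip_iet"
proof -
  interpret affine_iet 5 4 all_flip_partition "(!) [0, 2, 4, 6, 3 + c, 4 + c]"
      "(!) [0, -1, -1, -1, -1, -1]" all_flip_iet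
    using c by unfold_locales
      (auto simp: all_flip_partition_def all_flip_iet_def dom_int_def image_lo_def image_hi_def
         numeral_eq_Suc le_Suc_eq less_Suc_eq)
  interpret rotation_tower all_flip_iet "iet_dom 5 all_flip_partition" c 0 4
      "(!) [0, 2, 2, 4]" "(!) [1, -1, 1, -1]"
    using c by unfold_locales
      (auto simp: all_flip_iet_def all_flip_partition_def rotation_def iet_dom_def dom_int_def
        numeral_eq_Suc less_Suc_eq atLeastAtMostSuc_conv)
  have "iet_transitive 5 (real 4) all_flip_partition all_flip_iet"
    using c by (intro iet_transitiveI) (auto simp: numeral_eq_Suc less_Suc_eq)
  moreover have "num_flips 5 all_flip_partition all_flip_iet = 5"
    by (simp add: num_flips_eq atLeastAtMost_nat_numeral)
  moreover have "no_fake_discontinuity 5 all_flip_partition all_flip_iet"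
    unfolding no_fake_discontinuity_def fake_count_def Let_def card_filter_atLeastAtMost_eq_sum
    using c by (simp add: iet_pi_eq iet_theta_eq atLeastAtMost_nat_numeral iet_mid_def
        all_flip_partition_def field_simps)
  ultimately show ?thesis
    using is_IET by simp
qed

text \<open>Permutation (3 5 1 2 4), with configuration (b) at the pieces 2 and 3.\<close>

definition all_flip_fake_partition :: "nat \<Rightarrow> real" where
  "all_flip_fake_partition i = [0, 1, 2, 2 + c, 3, 4] ! i"

definition all_flip_fake_iet :: "real \<Rightarrow> real" where
  "all_flip_fake_iet x =
    (if x < 1 then 2 - x
    else if x < 2 then 5 - x
    else if x < 2 + c then 2 + c - x
    else if x < 3 then 3 + c - x
    else 6 - x)"

lemma all_flip_fake_iet_properties:
  "is_IET 5 4 all_flip_fake_partition all_flip_fake_iet \<and>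
    iet_transitive 5 4 all_flip_fake_partition all_flip_fake_iet \<and>
    num_flips 5 all_flip_fake_partition all_flip_fake_iet = 5 \<and>
    has_fake_discontinuity 5 all_flip_fake_partition all_flip_fake_iet"
proof -
  interpret affine_iet 5 4 all_flip_fake_partition "(!) [0, 2, 5, 2 + c, 3 + c, 6]"
      "(!) [0, -1, -1, -1, -1, -1]" all_flip_fake_iet
    using c by unfold_locales
      (auto simp: all_flip_fake_partition_def all_flip_fake_iet_def dom_int_def image_lo_def image_hi_def
         numeral_eq_Suc le_Suc_eq less_Suc_eq)
  interpret rotation_tower all_flip_fake_iet "iet_dom 5 all_flip_fake_partition" c 0 4
      "(!) [0, 2, 3, 3]" "(!) [1, -1, 1, -1]"
    using c by unfold_locales
      (auto simp: all_flip_fake_iet_def all_flip_fake_partition_def rotation_def iet_dom_def dom_int_def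
        numeral_eq_Suc less_Suc_eq atLeastAtMostSuc_conv)
  have "iet_transitive 5 (real 4) all_flip_fake_partition all_flip_fake_iet"
    using c by (intro iet_transitiveI) (auto simp: numeral_eq_Suc less_Suc_eq)
  moreover have "num_flips 5 all_flip_fake_partition all_flip_fake_iet = 5"
    by (simp add: num_flips_eq atLeastAtMost_nat_numeral)
  moreover have "has_fake_discontinuity 5 all_flip_fake_partition all_flip_fake_iet"
    unfolding has_fake_discontinuity_def fake_count_def Let_def card_filter_atLeastAtMost_eq_sum
    using c by (simp add: iet_pi_eq iet_theta_eq atLeastAtMost_nat_numeral iet_mid_def
        all_flip_fake_partition_def field_simps)
  ultimately show ?thesis
    using is_IET by simp
qed

end

lemma irrational_in_unit_interval: "\<exists>c::real. c \<notin> \<rat> \<and> 0 < c \<and> c < 1"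
proof -
  have "\<not> {0<..<1::real} \<subseteq> \<rat>"
    using uncountable_open_interval[of 0 1] countable_rat countable_subset by auto
  then show ?thesis by auto
qed

theorem lemma9p3:
  shows "(\<forall>f\<in>{1,2,3::nat}. \<exists>l a T. is_IET 4 l a T \<and> iet_transitive 4 l a T \<and>
            num_flips 4 a T = f \<and> no_fake_discontinuity 4 a T)
       \<and> (\<exists>l a T. is_IET 5 l a T \<and> iet_transitive 5 l a T \<and>
            num_flips 5 a T = 5 \<and> has_fake_discontinuity 5 a T)
       \<and> (\<exists>l a T. is_IET 5 l a T \<and> iet_transitive 5 l a T \<and>
            num_flips 5 a T = 5 \<and> no_fake_discontinuity 5 a T)"
proof -
  obtain c :: real where c: "c \<notin> \<rat>" "0 < c" "c < 1"
    using irrational_in_unit_interval by blast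
  note examples = one_flip_iet_properties[OF c] two_flip_iet_properties[OF c]
    three_flip_iet_properties[OF c] all_flip_iet_properties[OF c] all_flip_fake_iet_properties[OF c]
  show ?thesis
    using examples by blast
qed

end
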